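(* Let $\mu>0$, $\mathbf X_0\in\mathbb R^{n\times p}$ arbitrary, and fix $r\in(0,1)$. Over the set $\Gamma\cap\{\mathbf w:\|\mathbf w\|\ge r\}$, the function $\mathbf w\mapsto\mathbf w^*\nabla^2g(\mathbf w;\mathbf X_0)\mathbf w/\|\mathbf w\|^2$ is $L$-Lipschitz with $$L\le\frac{16n^3}{\mu^2}\|\mathbf X_0\|_\infty^3+\frac{8n^{3/2}}{\mu r}\|\mathbf X_0\|_\infty^2+\frac{48n^{5/2}}{\mu}\|\mathbf X_0\|_\infty^2+96n^{5/2}\|\mathbf X_0\|_\infty.$$
   Context: $h_\mu(z)=\mu\log\cosh(z/\mu)$. For $\mathbf Y\in\mathbb R^{n\times p}$ with columns $\mathbf y_k$, $f(\mathbf q;\mathbf Y)=\frac1p\sum_k h_\mu(\mathbf q^*\mathbf y_k)$; for $\mathbf w$ in the open unit ball of $\mathbb R^{n-1}$, $\mathbf q(\mathbf w)=(\mathbf w,\sqrt{1-\|\mathbf w\|^2})$ and $g(\mathbf w;\mathbf Y)=f(\mathbf q(\mathbf w);\mathbf Y)$; $\nabla^2$ is the Hessian in $\mathbf w$. $\Gamma=\{\mathbf w\in\mathbb R^{n-1}:\|\mathbf w\|<\sqrt{(4n-1)/(4n)}\}$. $\|\mathbf X\|_\infty$ denotes the maximum absolute value of the entries of $\mathbf X$. Lipschitz is with respect to the Euclidean norm on $\mathbf w$. *)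

theory Defs
  imports "HOL-Analysis.Analysis"
begin

definition hmu :: "real \<Rightarrow> real \<Rightarrow> real" where
  "hmu \<mu> z = \<mu> * ln (cosh (z / \<mu>))"

text \<open>A matrix Y in R^(n x p) with n = CARD('m) + 1, p = CARD('p), is given in block form:
  A (the first n-1 rows, a real^'p^'m) and b (the last row, a real^'p).
  The k-th column of Y is y_k = (column k A, b$k).
  For w in R^(n-1), q(w) = (w, sqrt(1 - |w|^2)), so q(w)^* y_k = w . column k A + sqrt(1-|w|^2) b$k.\<close>
definition gfun :: "real \<Rightarrow> real^'p^'m \<Rightarrow> real^'p \<Rightarrow> real^'m \<Rightarrow> real" where
  "gfun \<mu> A b w = (1 / real CARD('p)) *
     (\<Sum>k\<in>UNIV. hmu \<mu> (w \<bullet> column k A + sqrt (1 - (norm w)\<^sup>2) * b $ k))"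

definition partial_at :: "(real^'m \<Rightarrow> real) \<Rightarrow> 'm \<Rightarrow> real^'m \<Rightarrow> real" where
  "partial_at f i w = deriv (\<lambda>t. f (w + t *\<^sub>R axis i 1)) 0"

definition hessian :: "(real^'m \<Rightarrow> real) \<Rightarrow> real^'m \<Rightarrow> real^'m^'m" where
  "hessian f w = (\<chi> i j. partial_at (\<lambda>v. partial_at f j v) i w)"

definition maxabs :: "real^'p^'m \<Rightarrow> real^'p \<Rightarrow> real" where
  "maxabs A b = max (Max {\<bar>A $ i $ k\<bar> | i k. True}) (Max {\<bar>b $ k\<bar> | k. True})"

end

theory Submission
  imports Defs
begin

text \<open>With \<open>z\<^sub>k = q(w)\<^sup>* y\<^sub>k\<close> and \<open>s = sqrt (1 - \<parallel>w\<parallel>\<^sup>2)\<close>, differentiating twice along the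
  coordinate axes shows that the Rayleigh quotient of the Hessian is
  \<open>(1/p) \<Sum>\<^sub>k h''(z\<^sub>k) c\<^sub>k\<^sup>2 - b\<^sub>k h'(z\<^sub>k) / s\<^sup>3\<close>, where \<open>c\<^sub>k\<close> is the derivative of \<open>z\<^sub>k\<close> along
  \<open>w / \<parallel>w\<parallel>\<close>. On \<open>\<Gamma>\<close> we have \<open>1 / s < 2 sqrt n\<close>, so every factor is bounded and Lipschitz:
  \<open>h'\<close> and \<open>h''\<close> have bounded derivatives, the radial functions of \<open>\<parallel>w\<parallel>\<close> have derivatives
  bounded by powers of \<open>2 sqrt n\<close>, and \<open>w \<mapsto> w / \<parallel>w\<parallel>\<close> is \<open>1/r\<close>-Lipschitz outside the
  ball of radius \<open>r\<close>. The product rule for Lipschitz constants of bounded functions assembles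
  these, and \<open>sqrt (n - 1) + sqrt (4n - 1) \<le> 2n\<close> brings the constant into the stated form.\<close>


section \<open>Lipschitz constants of bounded products, sums and radial functions\<close>

lemma lipschitz_on_real_derivative_bound:
  fixes f f' :: "real \<Rightarrow> real"
  assumes "convex X"
    and "\<And>x. x \<in> X \<Longrightarrow> (f has_real_derivative f' x) (at x within X)"
    and "\<And>x. x \<in> X \<Longrightarrow> \<bar>f' x\<bar> \<le> C" and "0 \<le> C"
  shows "C-lipschitz_on X f"
proof (rule bounded_derivative_imp_lipschitz[OF _ assms(1) _ assms(4)])
  fix x assume "x \<in> X"
  then show "(f has_derivative (*) (f' x)) (at x within X)"
    using assms(2) by (simp add: has_field_derivative_def)
  show "onorm ((*) (f' x)) \<le> C"
  proof (rule onorm_le)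
    fix h :: real
    show "norm (f' x * h) \<le> C * norm h"
      using assms(3)[OF \<open>x \<in> X\<close>] by (simp add: abs_mult mult_right_mono)
  qed
qed

lemma lipschitz_on_mult_bounded:
  fixes f g :: "'a::metric_space \<Rightarrow> real"
  assumes f: "C-lipschitz_on U f" and g: "D-lipschitz_on U g"
    and bf: "\<And>x. x \<in> U \<Longrightarrow> \<bar>f x\<bar> \<le> A" and bg: "\<And>x. x \<in> U \<Longrightarrow> \<bar>g x\<bar> \<le> B"
    and "0 \<le> A" "0 \<le> B"
  shows "(A * D + B * C)-lipschitz_on U (\<lambda>x. f x * g x)"
proof (rule lipschitz_onI)
  show "0 \<le> A * D + B * C"
    using assms lipschitz_on_nonneg[OF f] lipschitz_on_nonneg[OF g] by simp
  fix x y assume xy: "x \<in> U" "y \<in> U"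
  have "\<bar>f x * g x - f y * g y\<bar> \<le> \<bar>f x\<bar> * \<bar>g x - g y\<bar> + \<bar>g y\<bar> * \<bar>f x - f y\<bar>"
  proof -
    have "f x * g x - f y * g y = f x * (g x - g y) + g y * (f x - f y)"
      by (simp add: algebra_simps)
    then show ?thesis
      by (metis abs_mult abs_triangle_ineq)
  qed
  also have "\<dots> \<le> A * (D * dist x y) + B * (C * dist x y)"
    using lipschitz_onD[OF f xy] lipschitz_onD[OF g xy] bf bg xy assms(5,6)
    by (intro add_mono mult_mono) (auto simp: dist_real_def)
  finally show "dist (f x * g x) (f y * g y) \<le> (A * D + B * C) * dist x y"
    by (simp add: dist_real_def algebra_simps)
qed

lemma lipschitz_on_sum:
  fixes f :: "'i \<Rightarrow> 'a::metric_space \<Rightarrow> 'b::real_normed_vector"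
  assumes "\<And>i. i \<in> I \<Longrightarrow> C-lipschitz_on U (f i)" and "0 \<le> C"
  shows "(real (card I) * C)-lipschitz_on U (\<lambda>x. \<Sum>i\<in>I. f i x)"
  using assms
proof (induction I rule: infinite_finite_induct)
  case (insert i I)
  then have "(C + real (card I) * C)-lipschitz_on U (\<lambda>x. f i x + (\<Sum>i\<in>I. f i x))"
    by (intro lipschitz_on_add) auto
  with insert show ?case by (simp add: algebra_simps)
qed (auto intro: lipschitz_on_constant lipschitz_on_mono)

lemma lipschitz_on_norm: "1-lipschitz_on U norm"
  by (rule lipschitz_onI) (simp_all add: dist_norm norm_triangle_ineq3)

lemma lipschitz_on_inner_left: "(norm a)-lipschitz_on U (\<lambda>x. x \<bullet> a)"
proof (rule lipschitz_onI)
  fix x y :: 'a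
  have "\<bar>(x - y) \<bullet> a\<bar> \<le> norm (x - y) * norm a" by (rule Cauchy_Schwarz_ineq2)
  then show "dist (x \<bullet> a) (y \<bullet> a) \<le> norm a * dist x y"
    by (simp add: dist_real_def dist_norm inner_diff_left mult.commute)
qed simp

lemma lipschitz_on_radial:
  fixes U :: "'a::real_normed_vector set"
  assumes "C-lipschitz_on T f" "norm ` U \<subseteq> T"
  shows "C-lipschitz_on U (\<lambda>x. f (norm x))"
  using lipschitz_on_compose2[OF lipschitz_on_norm lipschitz_on_subset[OF assms]] by simp

lemma norm_sgn_diff_le:
  fixes x y :: "'a::real_inner"
  assumes "r \<le> norm x" "norm x \<le> norm y" "0 < r"
  shows "norm (sgn x - sgn y) \<le> norm (x - y) / r"
proof -
  have nx: "norm x > 0" and ny: "norm y > 0" using assms by linarith+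
  define t where "t = norm y / norm x"
  define y' where "y' = (norm x / norm y) *\<^sub>R y"
  have t1: "t \<ge> 1" using assms nx by (simp add: t_def)
  have ny': "norm y' = norm x" using nx ny by (simp add: y'_def)
  have y: "y = t *\<^sub>R y'" using nx ny by (simp add: y'_def t_def)
  have cs: "x \<bullet> y' \<le> (norm x)\<^sup>2"
    using norm_cauchy_schwarz[of x y'] ny' by (simp add: power2_eq_square)
  have yy: "y' \<bullet> y' = x \<bullet> x" using ny' by (metis power2_norm_eq_inner)
  \<comment> \<open>shrinking \<open>y\<close> radially onto the sphere through \<open>x\<close> does not increase its distance to \<open>x\<close>\<close>
  have expand_y: "(norm (x - t *\<^sub>R y'))\<^sup>2 = (norm x)\<^sup>2 - 2 * t * (x \<bullet> y') + t\<^sup>2 * (norm x)\<^sup>2"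
    by (simp only: power2_norm_eq_inner)
       (simp add: yy inner_diff_left inner_diff_right inner_commute algebra_simps power2_eq_square)
  have expand_y': "(norm (x - y'))\<^sup>2 = (norm x)\<^sup>2 - 2 * (x \<bullet> y') + (norm x)\<^sup>2"
    by (simp only: power2_norm_eq_inner)
       (simp add: yy inner_diff_left inner_diff_right inner_commute algebra_simps power2_eq_square)
  have "(norm (x - y))\<^sup>2 - (norm (x - y'))\<^sup>2 = (t - 1) * ((t + 1) * (norm x)\<^sup>2 - 2 * (x \<bullet> y'))"
    unfolding y expand_y expand_y' by (simp add: algebra_simps power2_eq_square)
  also have "\<dots> \<ge> 0"
  proof (rule mult_nonneg_nonneg)
    have "2 * (norm x)\<^sup>2 \<le> (t + 1) * (norm x)\<^sup>2" using t1 by (intro mult_right_mono) auto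
    then show "0 \<le> (t + 1) * (norm x)\<^sup>2 - 2 * (x \<bullet> y')" using cs by linarith
  qed (use t1 in simp)
  finally have "(norm (x - y'))\<^sup>2 \<le> (norm (x - y))\<^sup>2" by simp
  then have "norm (x - y') \<le> norm (x - y)"
    by (rule power2_le_imp_le) simp
  moreover have "sgn x - sgn y = (1 / norm x) *\<^sub>R (x - y')"
    using nx ny by (simp add: sgn_div_norm y'_def scaleR_diff_right divide_inverse_commute)
  ultimately have "norm (sgn x - sgn y) \<le> norm (x - y) / norm x"
    using nx by (simp add: divide_right_mono)
  also have "\<dots> \<le> norm (x - y) / r" using assms by (simp add: frac_le)
  finally show ?thesis .
qed

lemma lipschitz_on_sgn:
  fixes U :: "'a::real_inner set"
  assumes "\<And>x. x \<in> U \<Longrightarrow> r \<le> norm x" and "0 < r"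
  shows "(1 / r)-lipschitz_on U sgn"
proof (rule lipschitz_onI)
  fix x y assume "x \<in> U" "y \<in> U"
  then have "norm (sgn x - sgn y) \<le> norm (x - y) / r"
    using assms norm_sgn_diff_le[of r x y] norm_sgn_diff_le[of r y x]
    by (cases "norm x \<le> norm y") (simp_all add: norm_minus_commute)
  then show "dist (sgn x) (sgn y) \<le> 1 / r * dist x y"
    by (simp add: dist_norm)
qed (use assms in simp)

section \<open>The smoothing function\<close>

definition hmu' :: "real \<Rightarrow> real \<Rightarrow> real" where
  "hmu' \<mu> z = tanh (z / \<mu>)"

definition hmu'' :: "real \<Rightarrow> real \<Rightarrow> real" where
  "hmu'' \<mu> z = (1 - (tanh (z / \<mu>))\<^sup>2) / \<mu>"

lemma hmu_has_real_derivative: "\<mu> > 0 \<Longrightarrow> (hmu \<mu> has_real_derivative hmu' \<mu> z) (at z)"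
  unfolding hmu_def[abs_def] hmu'_def
  by (auto intro!: derivative_eq_intros simp: tanh_def field_simps)

lemma hmu'_has_real_derivative: "\<mu> > 0 \<Longrightarrow> (hmu' \<mu> has_real_derivative hmu'' \<mu> z) (at z)"
  unfolding hmu'_def[abs_def] hmu''_def
  by (auto intro!: derivative_eq_intros simp: field_simps)

lemma abs_hmu'_le: "\<bar>hmu' \<mu> z\<bar> \<le> 1"
  using tanh_real_bounds[of "z / \<mu>"] by (auto simp: hmu'_def)

lemma abs_hmu''_le:
  assumes "\<mu> > 0" shows "\<bar>hmu'' \<mu> z\<bar> \<le> 1 / \<mu>"
proof -
  have "(tanh (z / \<mu>))\<^sup>2 < 1"
    using tanh_real_bounds[of "z / \<mu>"] by (simp add: abs_square_less_1 abs_less_iff)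
  then show ?thesis using assms by (simp add: hmu''_def divide_right_mono)
qed

lemma lipschitz_on_hmu':
  assumes "\<mu> > 0" shows "(1 / \<mu>)-lipschitz_on UNIV (hmu' \<mu>)"
  by (rule lipschitz_on_real_derivative_bound)
     (use assms hmu'_has_real_derivative abs_hmu''_le in auto)

lemma lipschitz_on_hmu'':
  assumes "\<mu> > 0" shows "(2 / \<mu>\<^sup>2)-lipschitz_on UNIV (hmu'' \<mu>)"
proof (rule lipschitz_on_real_derivative_bound)
  fix z :: real
  define \<tau> where "\<tau> = tanh (z / \<mu>)"
  show "(hmu'' \<mu> has_real_derivative - 2 * \<tau> * (1 - \<tau>\<^sup>2) / \<mu>\<^sup>2) (at z within UNIV)"
    unfolding hmu''_def[abs_def] \<tau>_def using assms
    by (auto intro!: derivative_eq_intros simp: field_simps power2_eq_square)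
  have "\<bar>\<tau>\<bar> < 1" using tanh_real_bounds[of "z / \<mu>"] by (auto simp: \<tau>_def)
  then have "\<bar>\<tau>\<bar> \<le> 1" "\<tau>\<^sup>2 \<le> 1" by (simp_all add: abs_square_le_1)
  then have "\<bar>\<tau> * (1 - \<tau>\<^sup>2)\<bar> \<le> 1" by (simp add: abs_mult mult_le_one)
  then show "\<bar>- 2 * \<tau> * (1 - \<tau>\<^sup>2) / \<mu>\<^sup>2\<bar> \<le> 2 / \<mu>\<^sup>2"
    using assms by (simp add: abs_mult divide_right_mono)
qed (simp_all add: assms)

section \<open>Functions of the radius on \<open>\<Gamma>\<close>\<close>

lemma sqrt_one_minus_square_bounds:
  fixes n t :: real
  assumes n: "n \<ge> 1" and t: "0 \<le> t" "t < sqrt ((4*n - 1) / (4*n))"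
  shows "0 < 1 - t\<^sup>2" "1 / sqrt (1 - t\<^sup>2) < 2 * sqrt n" "t / sqrt (1 - t\<^sup>2) < sqrt (4*n - 1)"
    "t < 1"
proof -
  have "0 \<le> (4*n - 1) / (4*n)" using n by simp
  then have "t\<^sup>2 < (4*n - 1) / (4*n)"
    using power_strict_mono[OF t(2) t(1), of 2] by simp
  then have t2: "4*n*t\<^sup>2 < 4*n - 1" and s2: "4*n*(1 - t\<^sup>2) > 1"
    using n by (simp_all add: field_simps)
  show pos: "0 < 1 - t\<^sup>2"
    using s2 n by (auto simp: zero_less_mult_iff dest: order.strict_trans[OF zero_less_one])
  have "1 / (1 - t\<^sup>2) < 4*n" using s2 pos by (simp add: field_simps)
  then have "(1 / sqrt (1 - t\<^sup>2))\<^sup>2 < (2 * sqrt n)\<^sup>2"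
    using pos n by (simp add: power_divide power_mult_distrib)
  then show "1 / sqrt (1 - t\<^sup>2) < 2 * sqrt n"
    by (rule power2_less_imp_less) (use n in simp)
  have "t\<^sup>2 / (1 - t\<^sup>2) < 4*n - 1" using t2 pos by (simp add: field_simps)
  then have "(t / sqrt (1 - t\<^sup>2))\<^sup>2 < (sqrt (4*n - 1))\<^sup>2"
    using pos n by (simp add: power_divide)
  then show "t / sqrt (1 - t\<^sup>2) < sqrt (4*n - 1)"
    by (rule power2_less_imp_less) (use n in simp)
  have "\<bar>t\<bar> < 1" using pos by (simp add: abs_square_less_1)
  then show "t < 1" by simp
qed

lemma lipschitz_on_sqrt_one_minus_square:
  assumes "n \<ge> 1"
  shows "(sqrt (4*n - 1))-lipschitz_on {0..<sqrt ((4*n - 1) / (4*n))} (\<lambda>t. sqrt (1 - t\<^sup>2))"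
proof (rule lipschitz_on_real_derivative_bound)
  fix t assume "t \<in> {0..<sqrt ((4*n - 1) / (4*n))}"
  then have t: "0 \<le> t" "t < sqrt ((4*n - 1) / (4*n))" by simp_all
  note bounds = sqrt_one_minus_square_bounds[OF assms t]
  then show "((\<lambda>t. sqrt (1 - t\<^sup>2)) has_real_derivative - (t / sqrt (1 - t\<^sup>2)))
      (at t within {0..<sqrt ((4*n - 1) / (4*n))})"
    by (auto intro!: derivative_eq_intros simp: field_simps)
  show "\<bar>- (t / sqrt (1 - t\<^sup>2))\<bar> \<le> sqrt (4*n - 1)"
    using bounds t by simp
qed (use assms in \<open>auto intro: convex_real_interval\<close>)

lemma lipschitz_on_div_sqrt_one_minus_square:
  assumes "n \<ge> 1"
  shows "((2 * sqrt n)^3)-lipschitz_on {0..<sqrt ((4*n - 1) / (4*n))} (\<lambda>t. t / sqrt (1 - t\<^sup>2))"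
proof (rule lipschitz_on_real_derivative_bound)
  fix t assume "t \<in> {0..<sqrt ((4*n - 1) / (4*n))}"
  then have t: "0 \<le> t" "t < sqrt ((4*n - 1) / (4*n))" by simp_all
  note bounds = sqrt_one_minus_square_bounds[OF assms t]
  define s where "s = sqrt (1 - t\<^sup>2)"
  have s: "s > 0" "s\<^sup>2 = 1 - t\<^sup>2" using bounds by (auto simp: s_def)
  have "((\<lambda>t. t / sqrt (1 - t\<^sup>2)) has_real_derivative (1 / s)^3) (at t)"
    using bounds(1) apply (auto intro!: derivative_eq_intros)
    using s apply (simp add: s_def[symmetric] s(2)[symmetric])
    using s apply (simp add: field_simps power3_eq_cube power2_eq_square)
    done
  then show "((\<lambda>t. t / sqrt (1 - t\<^sup>2)) has_real_derivative (1 / s)^3)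
      (at t within {0..<sqrt ((4*n - 1) / (4*n))})"
    by (rule has_field_derivative_at_within)
  have "(1 / s)^3 \<le> (2 * sqrt n)^3"
    by (rule power_mono) (use bounds s in \<open>auto simp: s_def\<close>)
  then show "\<bar>(1 / s)^3\<bar> \<le> (2 * sqrt n)^3"
    using s by simp
qed (use assms in \<open>auto intro: convex_real_interval\<close>)

lemma lipschitz_on_inverse_cube_sqrt_one_minus_square:
  assumes "n \<ge> 1"
  shows "(3 * (2 * sqrt n)^5)-lipschitz_on {0..<sqrt ((4*n - 1) / (4*n))}
           (\<lambda>t. 1 / (sqrt (1 - t\<^sup>2))^3)"
proof (rule lipschitz_on_real_derivative_bound)
  fix t assume "t \<in> {0..<sqrt ((4*n - 1) / (4*n))}"
  then have t: "0 \<le> t" "t < sqrt ((4*n - 1) / (4*n))" by simp_all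
  note bounds = sqrt_one_minus_square_bounds[OF assms t]
  define s where "s = sqrt (1 - t\<^sup>2)"
  have s: "s > 0" "s\<^sup>2 = 1 - t\<^sup>2" using bounds by (auto simp: s_def)
  have "((\<lambda>t. 1 / (sqrt (1 - t\<^sup>2))^3) has_real_derivative 3 * t * (1 / s)^5) (at t)"
    using bounds(1) apply (auto intro!: derivative_eq_intros)
    using s apply (simp add: s_def[symmetric] s(2)[symmetric])
    using s apply (simp add: field_simps eval_nat_numeral)
    done
  then show "((\<lambda>t. 1 / (sqrt (1 - t\<^sup>2))^3) has_real_derivative 3 * t * (1 / s)^5)
      (at t within {0..<sqrt ((4*n - 1) / (4*n))})"
    by (rule has_field_derivative_at_within)
  have "(1 / s)^5 \<le> (2 * sqrt n)^5"
    by (rule power_mono) (use bounds s in \<open>auto simp: s_def\<close>)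
  then have "3 * t * (1 / s)^5 \<le> 3 * 1 * (2 * sqrt n)^5"
    using bounds s t by (intro mult_mono) auto
  then show "\<bar>3 * t * (1 / s)^5\<bar> \<le> 3 * (2 * sqrt n)^5"
    using s t by simp
qed (use assms in \<open>auto intro: convex_real_interval\<close>)

section \<open>The Rayleigh quotient of the Hessian\<close>

definition qy :: "real^'p^'m \<Rightarrow> real^'p \<Rightarrow> 'p \<Rightarrow> real^'m \<Rightarrow> real" where
  "qy A b k w = w \<bullet> column k A + b $ k * sqrt (1 - (norm w)\<^sup>2)"

lemma gfun_eq_sum_qy:
  fixes A :: "real^'p^'m"
  shows "gfun \<mu> A b w = (1 / real CARD('p)) * (\<Sum>k\<in>UNIV. hmu \<mu> (qy A b k w))"
  by (simp add: gfun_def qy_def mult.commute)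

lemma axis_line_nth: "(v + t *\<^sub>R axis j 1) $ i = v $ i + t * (if i = j then 1 else 0)"
  by (simp add: axis_def)

lemma norm_axis_line_square:
  fixes v :: "real^'m"
  shows "(norm (v + t *\<^sub>R axis j 1))\<^sup>2 = (norm v)\<^sup>2 + 2 * t * v $ j + t\<^sup>2"
  by (simp only: power2_norm_eq_inner)
     (simp add: inner_add_left inner_add_right inner_axis inner_axis' inner_axis_axis
        inner_commute power2_eq_square algebra_simps)

lemma qy_axis_line:
  "qy A b k (v + t *\<^sub>R axis j 1)
     = v \<bullet> column k A + t * A $ j $ k + b $ k * sqrt (1 - ((norm v)\<^sup>2 + 2 * t * v $ j + t\<^sup>2))"
  by (simp add: qy_def inner_add_left inner_axis' norm_axis_line_square column_def)

lemma qy_axis_line_has_real_derivative: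
  assumes "norm v < 1"
  shows "((\<lambda>t. qy A b k (v + t *\<^sub>R axis j 1)) has_real_derivative
            A $ j $ k - v $ j * b $ k / sqrt (1 - (norm v)\<^sup>2)) (at 0)"
proof -
  have "0 < 1 - (norm v)\<^sup>2" using assms by (simp add: abs_square_less_1)
  then show ?thesis
    unfolding qy_axis_line by (auto intro!: derivative_eq_intros simp: field_simps)
qed

definition grad_g :: "real \<Rightarrow> real^'p^'m \<Rightarrow> real^'p \<Rightarrow> 'm \<Rightarrow> real^'m \<Rightarrow> real" where
  "grad_g \<mu> A b j v = (1 / real CARD('p)) *
     (\<Sum>k\<in>UNIV. hmu' \<mu> (qy A b k v) * (A $ j $ k - v $ j * b $ k / sqrt (1 - (norm v)\<^sup>2)))"

lemma partial_at_gfun: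
  fixes A :: "real^'p^'m"
  assumes "norm v < 1" "\<mu> > 0"
  shows "partial_at (gfun \<mu> A b) j v = grad_g \<mu> A b j v"
  unfolding partial_at_def gfun_eq_sum_qy grad_g_def
  using DERIV_chain2[OF hmu_has_real_derivative[OF assms(2)] qy_axis_line_has_real_derivative[OF assms(1)]]
  by (intro DERIV_imp_deriv DERIV_cmult DERIV_sum) simp

lemma partial_qy_axis_line_has_real_derivative:
  fixes w :: "real^'m"
  assumes "norm w < 1"
  shows "((\<lambda>t. A $ j $ k - (w + t *\<^sub>R axis i 1) $ j * b $ k / sqrt (1 - (norm (w + t *\<^sub>R axis i 1))\<^sup>2))
     has_real_derivative
     - b $ k * ((if j = i then 1 else 0) / sqrt (1 - (norm w)\<^sup>2)
                + w $ j * w $ i / (sqrt (1 - (norm w)\<^sup>2))^3)) (at 0)"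
proof -
  have pos: "0 < 1 - (norm w)\<^sup>2" using assms by (simp add: abs_square_less_1)
  define s where "s = sqrt (1 - (norm w)\<^sup>2)"
  have s: "s > 0" "s\<^sup>2 = 1 - (norm w)\<^sup>2" using pos by (auto simp: s_def)
  have "((\<lambda>t. c - (w $ j + t * d) * bk / sqrt (1 - ((norm w)\<^sup>2 + 2 * t * w $ i + t\<^sup>2)))
     has_real_derivative - bk * (d / s + w $ j * w $ i / s^3)) (at 0)" for c d bk
    using pos apply (auto intro!: derivative_eq_intros)
    using s apply (simp add: abs_of_pos[OF pos] s(2)[symmetric] s_def[symmetric])
    apply (simp add: field_simps power3_eq_cube power2_eq_square)
    done
  then show ?thesis unfolding axis_line_nth norm_axis_line_square s_def .
qed

definition hess_term :: "real \<Rightarrow> real^'p^'m \<Rightarrow> real^'p \<Rightarrow> real^'m \<Rightarrow> 'p \<Rightarrow> 'm \<Rightarrow> 'm \<Rightarrow> real" where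
  "hess_term \<mu> A b w k i j =
     hmu'' \<mu> (qy A b k w) * (A $ i $ k - w $ i * b $ k / sqrt (1 - (norm w)\<^sup>2))
       * (A $ j $ k - w $ j * b $ k / sqrt (1 - (norm w)\<^sup>2))
     - hmu' \<mu> (qy A b k w) * b $ k * ((if j = i then 1 else 0) / sqrt (1 - (norm w)\<^sup>2)
       + w $ j * w $ i / (sqrt (1 - (norm w)\<^sup>2))^3)"

lemma eventually_norm_axis_line_less:
  fixes w :: "real^'m"
  assumes "norm w < 1"
  shows "eventually (\<lambda>t. norm (w + t *\<^sub>R axis i 1) < 1) (nhds 0)"
  unfolding eventually_nhds_metric
proof (intro exI[of _ "1 - norm w"] conjI allI impI)
  show "0 < 1 - norm w" using assms by simp
  fix t :: real assume "dist t 0 < 1 - norm w"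
  then show "norm (w + t *\<^sub>R axis i 1) < 1"
    using norm_triangle_ineq[of w "t *\<^sub>R axis i (1::real)"] by simp
qed

lemma hessian_gfun:
  fixes A :: "real^'p^'m"
  assumes "norm w < 1" "\<mu> > 0"
  shows "hessian (gfun \<mu> A b) w $ i $ j = (1 / real CARD('p)) * (\<Sum>k\<in>UNIV. hess_term \<mu> A b w k i j)"
proof -
  have D: "((\<lambda>t. grad_g \<mu> A b j (w + t *\<^sub>R axis i 1)) has_real_derivative (1 / real CARD('p)) * (\<Sum>k\<in>UNIV. hess_term \<mu> A b w k i j)) (at 0)"
    unfolding grad_g_def hess_term_def
    by (intro DERIV_cmult DERIV_sum,
        rule DERIV_mult[OF DERIV_chain2[OF hmu'_has_real_derivative[OF assms(2)]
          qy_axis_line_has_real_derivative[OF assms(1)]]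
          partial_qy_axis_line_has_real_derivative[OF assms(1)], THEN DERIV_cong])
       (simp add: algebra_simps)
  have ev: "\<forall>\<^sub>F t in nhds 0. grad_g \<mu> A b j (w + t *\<^sub>R axis i 1) = partial_at (gfun \<mu> A b) j (w + t *\<^sub>R axis i 1)"
    using eventually_norm_axis_line_less[OF assms(1), of i] by eventually_elim (simp add: partial_at_gfun assms(2))
  have "hessian (gfun \<mu> A b) w $ i $ j = deriv (\<lambda>t. partial_at (gfun \<mu> A b) j (w + t *\<^sub>R axis i 1)) 0"
    by (simp add: hessian_def partial_at_def)
  also have "\<dots> = (1 / real CARD('p)) * (\<Sum>k\<in>UNIV. hess_term \<mu> A b w k i j)"
    using DERIV_cong_ev[OF refl ev refl] D by (blast intro: DERIV_imp_deriv)
  finally show ?thesis .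
qed

text \<open>The derivative of \<open>qy A b k\<close> in the radial direction \<open>sgn w\<close>.\<close>
definition radial_qy :: "real^'p^'m \<Rightarrow> real^'p \<Rightarrow> 'p \<Rightarrow> real^'m \<Rightarrow> real" where
  "radial_qy A b k w = sgn w \<bullet> column k A - b $ k * (norm w / sqrt (1 - (norm w)\<^sup>2))"

lemma radial_qy_eq:
  assumes "w \<noteq> 0"
  shows "radial_qy A b k w = (w \<bullet> column k A) / norm w - norm w * b $ k / sqrt (1 - (norm w)\<^sup>2)"
  using assms by (simp add: radial_qy_def sgn_div_norm divide_inverse_commute)

definition rayleigh_g :: "real \<Rightarrow> real^'p^'m \<Rightarrow> real^'p \<Rightarrow> real^'m \<Rightarrow> real" where
  "rayleigh_g \<mu> A b w = (1 / real CARD('p)) *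
     (\<Sum>k\<in>UNIV. hmu'' \<mu> (qy A b k w) * (radial_qy A b k w)\<^sup>2
                - b $ k * hmu' \<mu> (qy A b k w) * (1 / (sqrt (1 - (norm w)\<^sup>2))^3))"

lemma quadratic_form_rank_one_update:
  fixes w \<alpha> :: "'m::finite \<Rightarrow> real"
  shows "(\<Sum>i\<in>UNIV. w i * (\<Sum>j\<in>UNIV. (c1 * \<alpha> i * \<alpha> j - c2 * ((if j = i then 1 else 0) * e + w j * w i * e3)) * w j))
       = c1 * (\<Sum>i\<in>UNIV. w i * \<alpha> i)\<^sup>2 - c2 * (e * (\<Sum>i\<in>UNIV. w i * w i) + e3 * (\<Sum>i\<in>UNIV. w i * w i)\<^sup>2)"
proof -
  have row: "(\<Sum>j\<in>UNIV. (c1 * \<alpha> i * \<alpha> j - c2 * ((if j = i then 1 else 0) * e + w j * w i * e3)) * w j)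
      = c1 * \<alpha> i * (\<Sum>j\<in>UNIV. w j * \<alpha> j) - c2 * e * w i - c2 * e3 * w i * (\<Sum>j\<in>UNIV. w j * w j)" for i
  proof -
    have "(\<Sum>j\<in>UNIV. (c1 * \<alpha> i * \<alpha> j - c2 * ((if j = i then 1 else 0) * e + w j * w i * e3)) * w j)
      = (\<Sum>j\<in>UNIV. c1 * \<alpha> i * (w j * \<alpha> j) - (if j = i then c2 * e * w j else 0) - c2 * e3 * w i * (w j * w j))"
      by (rule sum.cong) (auto simp: algebra_simps)
    then show ?thesis by (simp add: sum_subtractf sum_distrib_left)
  qed
  have "(\<Sum>i\<in>UNIV. w i * (\<Sum>j\<in>UNIV. (c1 * \<alpha> i * \<alpha> j - c2 * ((if j = i then 1 else 0) * e + w j * w i * e3)) * w j))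
     = (\<Sum>i\<in>UNIV. c1 * (w i * \<alpha> i) * (\<Sum>j\<in>UNIV. w j * \<alpha> j) - c2 * (e * (w i * w i) + e3 * (w i * w i) * (\<Sum>j\<in>UNIV. w j * w j)))"
    by (rule sum.cong[OF refl]) (simp only: row, simp add: algebra_simps)
  also have "\<dots> = c1 * (\<Sum>i\<in>UNIV. w i * \<alpha> i)\<^sup>2 - c2 * (e * (\<Sum>i\<in>UNIV. w i * w i) + e3 * (\<Sum>i\<in>UNIV. w i * w i)\<^sup>2)"
    by (simp add: sum_subtractf sum.distrib sum_distrib_left sum_distrib_right power2_eq_square algebra_simps)
  finally show ?thesis .
qed

lemma quadratic_form_cmult_sum:
  fixes w :: "'m::finite \<Rightarrow> real" and T :: "'k \<Rightarrow> 'm \<Rightarrow> 'm \<Rightarrow> real"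
  assumes "finite K"
  shows "(\<Sum>i\<in>UNIV. w i * (\<Sum>j\<in>UNIV. (c * (\<Sum>k\<in>K. T k i j)) * w j))
       = c * (\<Sum>k\<in>K. (\<Sum>i\<in>UNIV. w i * (\<Sum>j\<in>UNIV. T k i j * w j)))"
proof -
  have "(\<Sum>i\<in>UNIV. w i * (\<Sum>j\<in>UNIV. (c * (\<Sum>k\<in>K. T k i j)) * w j))
      = (\<Sum>i\<in>UNIV. \<Sum>j\<in>UNIV. \<Sum>k\<in>K. c * (w i * T k i j * w j))"
    by (simp add: sum_distrib_left sum_distrib_right algebra_simps)
  also have "\<dots> = (\<Sum>i\<in>UNIV. \<Sum>k\<in>K. \<Sum>j\<in>UNIV. c * (w i * T k i j * w j))"
    by (rule sum.cong[OF refl]) (rule sum.swap)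
  also have "\<dots> = (\<Sum>k\<in>K. \<Sum>i\<in>UNIV. \<Sum>j\<in>UNIV. c * (w i * T k i j * w j))"
    by (rule sum.swap)
  also have "\<dots> = c * (\<Sum>k\<in>K. (\<Sum>i\<in>UNIV. w i * (\<Sum>j\<in>UNIV. T k i j * w j)))"
    by (simp add: sum_distrib_left sum_distrib_right algebra_simps)
  finally show ?thesis .
qed

lemma quadratic_form_hess_term:
  fixes A :: "real^'p^'m" and w :: "real^'m"
  assumes w1: "norm w < 1" and w0: "w \<noteq> 0"
  shows "(\<Sum>i\<in>UNIV. w $ i * (\<Sum>j\<in>UNIV. hess_term \<mu> A b w k i j * w $ j))
    = (norm w)\<^sup>2 * (hmu'' \<mu> (qy A b k w) * (radial_qy A b k w)\<^sup>2
                    - b $ k * hmu' \<mu> (qy A b k w) * (1 / (sqrt (1 - (norm w)\<^sup>2))^3))"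
proof -
  define s where "s = sqrt (1 - (norm w)\<^sup>2)"
  define X where "X = w \<bullet> column k A"
  define \<rho> where "\<rho> = norm w"
  have "0 < 1 - (norm w)\<^sup>2" using w1 by (simp add: abs_square_less_1)
  then have s: "s > 0" "s\<^sup>2 + \<rho>\<^sup>2 = 1" by (auto simp: s_def \<rho>_def)
  have \<rho>: "\<rho> > 0" using w0 by (simp add: \<rho>_def)
  have norm2: "(\<Sum>i\<in>UNIV. w $ i * w $ i) = \<rho>\<^sup>2"
    by (simp add: \<rho>_def power2_norm_eq_inner inner_vec_def)
  have "(\<Sum>i\<in>UNIV. w $ i * (A $ i $ k - w $ i * b $ k / s))
      = (\<Sum>i\<in>UNIV. w $ i * A $ i $ k - (w $ i * w $ i) * (b $ k / s))"
    by (rule sum.cong) (auto simp: algebra_simps)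
  also have "\<dots> = (\<Sum>i\<in>UNIV. w $ i * A $ i $ k) - (\<Sum>i\<in>UNIV. w $ i * w $ i) * (b $ k / s)"
    by (simp only: sum_subtractf sum_distrib_right)
  also have "\<dots> = X - \<rho>\<^sup>2 * (b $ k / s)"
    by (simp add: norm2 X_def inner_vec_def column_def)
  also have "\<dots> = \<rho> * radial_qy A b k w"
    unfolding radial_qy_eq[OF w0] X_def[symmetric] s_def[symmetric] unfolding \<rho>_def[symmetric]
    using \<rho> by (simp add: field_simps power2_eq_square)
  finally have radial: "(\<Sum>i\<in>UNIV. w $ i * (A $ i $ k - w $ i * b $ k / s)) = \<rho> * radial_qy A b k w" .
  have cube: "(1 / s) * \<rho>\<^sup>2 + (1 / s^3) * (\<rho>\<^sup>2)\<^sup>2 = \<rho>\<^sup>2 / s^3"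
  proof -
    have "(1 / s) * \<rho>\<^sup>2 + (1 / s^3) * (\<rho>\<^sup>2)\<^sup>2 = \<rho>\<^sup>2 * (s\<^sup>2 + \<rho>\<^sup>2) / s^3"
      using s(1) by (simp add: field_simps power2_eq_square power3_eq_cube)
    then show ?thesis using s(2) by simp
  qed
  have "(\<Sum>i\<in>UNIV. w $ i * (\<Sum>j\<in>UNIV. hess_term \<mu> A b w k i j * w $ j))
     = (\<Sum>i\<in>UNIV. w $ i * (\<Sum>j\<in>UNIV. (hmu'' \<mu> (qy A b k w) * (A $ i $ k - w $ i * b $ k / s)
           * (A $ j $ k - w $ j * b $ k / s) - (hmu' \<mu> (qy A b k w) * b $ k)
           * ((if j = i then 1 else 0) * (1 / s) + w $ j * w $ i * (1 / s^3))) * w $ j))"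
    unfolding hess_term_def s_def by (simp add: algebra_simps)
  also have "\<dots> = hmu'' \<mu> (qy A b k w) * (\<Sum>i\<in>UNIV. w $ i * (A $ i $ k - w $ i * b $ k / s))\<^sup>2
       - (hmu' \<mu> (qy A b k w) * b $ k)
         * ((1 / s) * (\<Sum>i\<in>UNIV. w $ i * w $ i) + (1 / s^3) * (\<Sum>i\<in>UNIV. w $ i * w $ i)\<^sup>2)"
    by (rule quadratic_form_rank_one_update)
  finally show ?thesis
    unfolding radial norm2 cube by (simp add: s_def \<rho>_def algebra_simps power2_eq_square)
qed

lemma rayleigh_quotient_hessian_gfun:
  fixes A :: "real^'p^'m" and w :: "real^'m"
  assumes "norm w < 1" "w \<noteq> 0" "\<mu> > 0"
  shows "(w \<bullet> (hessian (gfun \<mu> A b) w *v w)) / (norm w)\<^sup>2 = rayleigh_g \<mu> A b w"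
proof -
  have "w \<bullet> (hessian (gfun \<mu> A b) w *v w)
      = (\<Sum>i\<in>UNIV. w $ i * (\<Sum>j\<in>UNIV. ((1 / real CARD('p)) * (\<Sum>k\<in>UNIV. hess_term \<mu> A b w k i j)) * w $ j))"
    using assms by (simp add: inner_vec_def matrix_vector_mult_def hessian_gfun)
  also have "\<dots> = (1 / real CARD('p)) * (\<Sum>k\<in>UNIV. \<Sum>i\<in>UNIV. w $ i * (\<Sum>j\<in>UNIV. hess_term \<mu> A b w k i j * w $ j))"
    by (rule quadratic_form_cmult_sum) simp
  also have "\<dots> = (1 / real CARD('p)) * (\<Sum>k\<in>UNIV. (norm w)\<^sup>2 * (hmu'' \<mu> (qy A b k w) * (radial_qy A b k w)\<^sup>2
                    - b $ k * hmu' \<mu> (qy A b k w) * (1 / (sqrt (1 - (norm w)\<^sup>2))^3)))"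
    by (simp only: quadratic_form_hess_term[OF assms(1,2)])
  also have "\<dots> = (norm w)\<^sup>2 * rayleigh_g \<mu> A b w"
    by (simp add: rayleigh_g_def sum_distrib_left mult.left_commute)
  finally show ?thesis using assms by simp
qed

section \<open>The Lipschitz estimate\<close>

lemma maxabs_bounds:
  fixes A :: "real^'p^'m" and b :: "real^'p"
  shows "\<bar>A $ i $ k\<bar> \<le> maxabs A b" "\<bar>b $ k\<bar> \<le> maxabs A b" "0 \<le> maxabs A b"
proof -
  have "{\<bar>A $ i $ k\<bar> | i k. True} = (\<lambda>(i, k). \<bar>A $ i $ k\<bar>) ` UNIV"
    and "{\<bar>b $ k\<bar> | k. True} = (\<lambda>k. \<bar>b $ k\<bar>) ` UNIV" by auto
  then have "finite {\<bar>A $ i $ k\<bar> | i k. True}" "finite {\<bar>b $ k\<bar> | k. True}" by simp_all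
  then have "\<bar>A $ i $ k\<bar> \<le> Max {\<bar>A $ i $ k\<bar> | i k. True}" "\<bar>b $ k\<bar> \<le> Max {\<bar>b $ k\<bar> | k. True}"
    by (auto intro: Max_ge)
  then show "\<bar>A $ i $ k\<bar> \<le> maxabs A b" "\<bar>b $ k\<bar> \<le> maxabs A b"
    unfolding maxabs_def by linarith+
  then show "0 \<le> maxabs A b" by (meson abs_ge_zero order_trans)
qed

lemma norm_column_le_maxabs:
  fixes A :: "real^'p^'m" and b :: "real^'p"
  shows "norm (column k A) \<le> sqrt (real CARD('m)) * maxabs A b"
proof (rule power2_le_imp_le)
  have "(norm (column k A))\<^sup>2 = (\<Sum>i\<in>UNIV. A $ i $ k * A $ i $ k)"
    by (simp add: power2_norm_eq_inner inner_vec_def column_def)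
  also have "\<dots> \<le> (\<Sum>i\<in>(UNIV::'m set). (maxabs A b)\<^sup>2)"
  proof (rule sum_mono)
    fix i
    have "\<bar>A $ i $ k\<bar>\<^sup>2 \<le> (maxabs A b)\<^sup>2" by (rule power_mono[OF maxabs_bounds(1)]) simp
    then show "A $ i $ k * A $ i $ k \<le> (maxabs A b)\<^sup>2" by (simp add: power2_eq_square)
  qed
  also have "\<dots> = (sqrt (real CARD('m)) * maxabs A b)\<^sup>2" by (simp add: power_mult_distrib)
  finally show "(norm (column k A))\<^sup>2 \<le> (sqrt (real CARD('m)) * maxabs A b)\<^sup>2" .
qed (simp add: maxabs_bounds)

lemma lipschitz_on_qy:
  fixes A :: "real^'p^'m"
  assumes n: "n \<ge> 1" and U: "\<And>w. w \<in> U \<Longrightarrow> norm w < sqrt ((4*n - 1) / (4*n))"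
  shows "((sqrt (real CARD('m)) + sqrt (4*n - 1)) * maxabs A b)-lipschitz_on U (qy A b k)"
proof -
  have "norm ` U \<subseteq> {0..<sqrt ((4*n - 1) / (4*n))}" using U by auto
  from lipschitz_on_radial[OF lipschitz_on_sqrt_one_minus_square[OF n] this]
  have "(maxabs A b * sqrt (4*n - 1))-lipschitz_on U (\<lambda>w. b $ k * sqrt (1 - (norm w)\<^sup>2))"
    by (rule lipschitz_on_cmult_real_upper) (rule maxabs_bounds)
  with lipschitz_on_mono[OF lipschitz_on_inner_left order_refl norm_column_le_maxabs]
  have "(sqrt (real CARD('m)) * maxabs A b + maxabs A b * sqrt (4*n - 1))-lipschitz_on U (qy A b k)"
    unfolding qy_def by (rule lipschitz_on_add)
  then show ?thesis by (simp add: algebra_simps)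
qed

lemma lipschitz_on_radial_qy:
  fixes A :: "real^'p^'m"
  assumes n: "n \<ge> 1" and r: "0 < r"
    and U: "\<And>w. w \<in> U \<Longrightarrow> norm w < sqrt ((4*n - 1) / (4*n)) \<and> r \<le> norm w"
  shows "(sqrt (real CARD('m)) * maxabs A b / r + maxabs A b * (2 * sqrt n)^3)-lipschitz_on U
           (radial_qy A b k)"
proof -
  have "(norm (column k A) * (1 / r))-lipschitz_on U (\<lambda>w. sgn w \<bullet> column k A)"
    by (rule lipschitz_on_compose2[OF lipschitz_on_sgn lipschitz_on_inner_left]) (use U r in auto)
  then have sgn_part: "(sqrt (real CARD('m)) * maxabs A b / r)-lipschitz_on U (\<lambda>w. sgn w \<bullet> column k A)"
    by (rule lipschitz_on_mono)
       (use r divide_right_mono[OF norm_column_le_maxabs[of k A b], of r] in auto)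
  have "norm ` U \<subseteq> {0..<sqrt ((4*n - 1) / (4*n))}" using U by auto
  from lipschitz_on_radial[OF lipschitz_on_div_sqrt_one_minus_square[OF n] this]
  have "(maxabs A b * (2 * sqrt n)^3)-lipschitz_on U (\<lambda>w. b $ k * (norm w / sqrt (1 - (norm w)\<^sup>2)))"
    by (rule lipschitz_on_cmult_real_upper) (rule maxabs_bounds)
  with sgn_part show ?thesis
    unfolding radial_qy_def by (rule lipschitz_on_diff)
qed

lemma abs_radial_qy_le:
  fixes A :: "real^'p^'m"
  assumes n: "n \<ge> 1" and w: "norm w < sqrt ((4*n - 1) / (4*n))"
  shows "\<bar>radial_qy A b k w\<bar> \<le> (sqrt (real CARD('m)) + sqrt (4*n - 1)) * maxabs A b"
proof -
  note bounds = sqrt_one_minus_square_bounds[OF n norm_ge_zero w]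
  have "\<bar>sgn w \<bullet> column k A\<bar> \<le> norm (column k A)"
    using Cauchy_Schwarz_ineq2[of "sgn w" "column k A"] by (cases "w = 0") (simp_all add: norm_sgn)
  also have "\<dots> \<le> sqrt (real CARD('m)) * maxabs A b" by (rule norm_column_le_maxabs)
  finally have "\<bar>sgn w \<bullet> column k A\<bar> \<le> sqrt (real CARD('m)) * maxabs A b" .
  moreover have "\<bar>b $ k * (norm w / sqrt (1 - (norm w)\<^sup>2))\<bar> \<le> maxabs A b * sqrt (4*n - 1)"
    unfolding abs_mult using bounds
    by (intro mult_mono maxabs_bounds) (auto simp: less_imp_le)
  ultimately show ?thesis
    unfolding radial_qy_def by (smt (verit) distrib_right mult.commute)
qed

lemma lipschitz_on_inverse_cube:
  assumes n: "n \<ge> 1" and U: "\<And>w. w \<in> U \<Longrightarrow> norm w < sqrt ((4*n - 1) / (4*n))"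
  shows "(3 * (2 * sqrt n)^5)-lipschitz_on U (\<lambda>w::'a::real_normed_vector. 1 / (sqrt (1 - (norm w)\<^sup>2))^3)"
  by (rule lipschitz_on_radial[OF lipschitz_on_inverse_cube_sqrt_one_minus_square[OF n]]) (use U in auto)

lemma abs_inverse_cube_le:
  assumes n: "n \<ge> 1" and w: "norm w < sqrt ((4*n - 1) / (4*n))"
  shows "\<bar>1 / (sqrt (1 - (norm w)\<^sup>2))^3\<bar> \<le> (2 * sqrt n)^3"
proof -
  note bounds = sqrt_one_minus_square_bounds[OF n norm_ge_zero w]
  have "(1 / sqrt (1 - (norm w)\<^sup>2))^3 \<le> (2 * sqrt n)^3"
    by (rule power_mono) (use bounds in auto)
  then show ?thesis using bounds by (simp add: power_divide)
qed

lemma lipschitz_on_rayleigh_summand: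
  fixes A :: "real^'p^'m" and b :: "real^'p"
  assumes mu: "\<mu> > 0" and n: "n \<ge> 1" and r: "0 < r"
    and U: "\<And>w. w \<in> U \<Longrightarrow> norm w < sqrt ((4*n - 1) / (4*n)) \<and> r \<le> norm w"
  defines "M \<equiv> maxabs A b"
  defines "K \<equiv> (sqrt (real CARD('m)) + sqrt (4*n - 1)) * M"
    and "Lr \<equiv> sqrt (real CARD('m)) * M / r + M * (2 * sqrt n)^3"
  shows "(1/\<mu> * (K * Lr + K * Lr) + K * K * (2/\<mu>\<^sup>2 * K)
          + (M * (3 * (2 * sqrt n)^5) + (2 * sqrt n)^3 * (M * (1/\<mu> * K))))-lipschitz_on U
          (\<lambda>w. hmu'' \<mu> (qy A b k w) * (radial_qy A b k w * radial_qy A b k w)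
               - b $ k * hmu' \<mu> (qy A b k w) * (1 / (sqrt (1 - (norm w)\<^sup>2))^3))"
proof (rule lipschitz_on_diff)
  have M: "0 \<le> M" "\<bar>b $ k\<bar> \<le> M" by (simp_all add: M_def maxabs_bounds)
  have U1: "norm w < sqrt ((4*n - 1) / (4*n))" if "w \<in> U" for w using U that by blast
  have "0 \<le> K" using M n by (simp add: K_def)
  have qy: "K-lipschitz_on U (qy A b k)"
    unfolding K_def M_def by (rule lipschitz_on_qy[OF n U1])
  have rad: "Lr-lipschitz_on U (radial_qy A b k)"
    unfolding Lr_def M_def by (rule lipschitz_on_radial_qy[OF n r U])
  have rad_bd: "\<bar>radial_qy A b k w\<bar> \<le> K" if "w \<in> U" for w
    unfolding K_def M_def by (rule abs_radial_qy_le[OF n U1[OF that]])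
  have h2: "(2/\<mu>\<^sup>2 * K)-lipschitz_on U (\<lambda>w. hmu'' \<mu> (qy A b k w))"
    by (rule lipschitz_on_compose2[OF qy lipschitz_on_subset[OF lipschitz_on_hmu''[OF mu]]]) simp
  have rad2: "(K * Lr + K * Lr)-lipschitz_on U (\<lambda>w. radial_qy A b k w * radial_qy A b k w)"
    by (rule lipschitz_on_mult_bounded[OF rad rad rad_bd rad_bd \<open>0 \<le> K\<close> \<open>0 \<le> K\<close>])
  have rad2_bd: "\<bar>radial_qy A b k w * radial_qy A b k w\<bar> \<le> K * K" if "w \<in> U" for w
    unfolding abs_mult using rad_bd[OF that] by (intro mult_mono) auto
  show "(1/\<mu> * (K * Lr + K * Lr) + K * K * (2/\<mu>\<^sup>2 * K))-lipschitz_on U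
      (\<lambda>w. hmu'' \<mu> (qy A b k w) * (radial_qy A b k w * radial_qy A b k w))"
    by (rule lipschitz_on_mult_bounded[OF h2 rad2 _ rad2_bd])
       (use mu abs_hmu''_le[OF mu] \<open>0 \<le> K\<close> in auto)
  have "(1/\<mu> * K)-lipschitz_on U (\<lambda>w. hmu' \<mu> (qy A b k w))"
    by (rule lipschitz_on_compose2[OF qy lipschitz_on_subset[OF lipschitz_on_hmu'[OF mu]]]) simp
  then have h1: "(M * (1/\<mu> * K))-lipschitz_on U (\<lambda>w. b $ k * hmu' \<mu> (qy A b k w))"
    by (rule lipschitz_on_cmult_real_upper) (rule M)
  have h1_bd: "\<bar>b $ k * hmu' \<mu> (qy A b k w)\<bar> \<le> M" for w
    using mult_mono[OF M(2) abs_hmu'_le[of \<mu> "qy A b k w"]] M(1) by (simp add: abs_mult)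
  show "(M * (3 * (2 * sqrt n)^5) + (2 * sqrt n)^3 * (M * (1/\<mu> * K)))-lipschitz_on U
      (\<lambda>w. b $ k * hmu' \<mu> (qy A b k w) * (1 / (sqrt (1 - (norm w)\<^sup>2))^3))"
    by (rule lipschitz_on_mult_bounded[OF h1 lipschitz_on_inverse_cube[OF n U1] h1_bd])
       (use abs_inverse_cube_le[OF n U1] M(1) n in auto)
qed

lemma lipschitz_on_rayleigh_g:
  fixes A :: "real^'p^'m" and b :: "real^'p"
  assumes mu: "\<mu> > 0" and n: "n \<ge> 1" and r: "0 < r"
    and U: "\<And>w. w \<in> U \<Longrightarrow> norm w < sqrt ((4*n - 1) / (4*n)) \<and> r \<le> norm w"
  defines "M \<equiv> maxabs A b"
  defines "K \<equiv> (sqrt (real CARD('m)) + sqrt (4*n - 1)) * M"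
    and "Lr \<equiv> sqrt (real CARD('m)) * M / r + M * (2 * sqrt n)^3"
  shows "(1/\<mu> * (K * Lr + K * Lr) + K * K * (2/\<mu>\<^sup>2 * K)
          + (M * (3 * (2 * sqrt n)^5) + (2 * sqrt n)^3 * (M * (1/\<mu> * K))))-lipschitz_on U
           (rayleigh_g \<mu> A b)"
    (is "?L-lipschitz_on U _")
proof -
  note summand = lipschitz_on_rayleigh_summand[OF mu n r U, where A = A and b = b,
      folded M_def, folded K_def Lr_def]
  have "(1 / real CARD('p) * (real CARD('p) * ?L))-lipschitz_on U (rayleigh_g \<mu> A b)"
    unfolding rayleigh_g_def power2_eq_square[of "radial_qy A b _ _"]
    by (intro lipschitz_on_cmult_real_nonneg lipschitz_on_sum summand)
       (use lipschitz_on_nonneg[OF summand] in auto)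
  then show ?thesis by simp
qed

lemma sqrt_add_sqrt_le:
  fixes d :: real assumes d: "d \<ge> 1"
  shows "sqrt d + sqrt (4*(d+1)-1) \<le> 2*(d+1)"
proof -
  have a: "(sqrt d)^2 = d" using d by simp
  have c: "(sqrt (4*(d+1)-1))^2 = 4*(d+1)-1" using d by simp
  have am: "2 * (sqrt d * sqrt (4*(d+1)-1)) \<le> (sqrt d)^2 + (sqrt (4*(d+1)-1))^2"
    using sum_squares_bound[of "sqrt d" "sqrt (4*(d+1)-1)"] by (simp add: power2_eq_square)
  have "(sqrt d + sqrt (4*(d+1)-1))^2 = (sqrt d)^2 + (sqrt (4*(d+1)-1))^2 + 2 * (sqrt d * sqrt (4*(d+1)-1))"
    by (simp add: power2_eq_square algebra_simps)
  also have "\<dots> \<le> (d + (4*(d+1)-1)) + (d + (4*(d+1)-1))" unfolding a c by (rule add_left_mono[OF am[unfolded a c]])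
  also have "\<dots> = 2 * (d + (4*(d+1)-1))" by simp
  also have "\<dots> \<le> (2*(d+1))^2"
  proof -
    have "0 \<le> (d - 1) * (4*d+2)" using d by simp
    then show ?thesis by (simp add: power2_eq_square algebra_simps)
  qed
  finally show ?thesis by (rule power2_le_imp_le) (use d in simp)
qed

lemma rayleigh_lipschitz_constant_le:
  fixes d n \<mu> r M :: real
  assumes d: "d \<ge> 1" and n: "n = d + 1" and mu: "\<mu> > 0" and r: "r > 0" and M: "M \<ge> 0"
  defines "K \<equiv> (sqrt d + sqrt (4*n - 1)) * M"
    and "Lr \<equiv> sqrt d * M / r + M * (2 * sqrt n)^3"
  shows "1/\<mu> * (K * Lr + K * Lr) + K * K * (2/\<mu>\<^sup>2 * K)
          + (M * (3 * (2 * sqrt n)^5) + (2 * sqrt n)^3 * (M * (1/\<mu> * K)))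
     \<le> 16 * n ^ 3 / \<mu>\<^sup>2 * M ^ 3 + 8 * n powr (3/2) / (\<mu> * r) * M\<^sup>2
        + 48 * n powr (5/2) / \<mu> * M\<^sup>2 + 96 * n powr (5/2) * M"
proof -
  define \<kappa> where "\<kappa> = sqrt d + sqrt (4*n - 1)"
  define q where "q = sqrt n"
  have q0: "q \<ge> 0" and qq: "q\<^sup>2 = n" using d n by (auto simp: q_def)
  have \<kappa>: "0 \<le> \<kappa>" "\<kappa> \<le> 2 * q\<^sup>2" using sqrt_add_sqrt_le[OF d] d n qq by (auto simp: \<kappa>_def)
  have sd: "0 \<le> sqrt d" "sqrt d \<le> q" using n d by (auto simp: q_def)
  have p3: "n powr (3/2) = q^3" and p5: "n powr (5/2) = q^5"
    using d n powr_power[of n "1/2" 3] powr_power[of n "1/2" 5] by (simp_all add: q_def powr_half_sqrt)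
  have n3: "n^3 = q^6" unfolding qq[symmetric] by (simp add: power_mult[symmetric])
  have lhs: "1/\<mu> * (K * Lr + K * Lr) + K * K * (2/\<mu>\<^sup>2 * K)
          + (M * (3 * (2 * sqrt n)^5) + (2 * sqrt n)^3 * (M * (1/\<mu> * K)))
      = (2 * \<kappa> * sqrt d) * (M\<^sup>2 / (\<mu> * r)) + (24 * \<kappa> * q^3) * (M\<^sup>2 / \<mu>)
        + (2 * \<kappa>^3) * (M^3 / \<mu>\<^sup>2) + 96 * q^5 * M"
    unfolding K_def Lr_def \<kappa>_def[symmetric] q_def[symmetric] using mu r
    by (simp add: field_simps power2_eq_square power3_eq_cube eval_nat_numeral)
  have rhs: "16 * n ^ 3 / \<mu>\<^sup>2 * M ^ 3 + 8 * n powr (3/2) / (\<mu> * r) * M\<^sup>2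
        + 48 * n powr (5/2) / \<mu> * M\<^sup>2 + 96 * n powr (5/2) * M
      = (8 * q^3) * (M\<^sup>2 / (\<mu> * r)) + (48 * q^5) * (M\<^sup>2 / \<mu>) + (16 * q^6) * (M^3 / \<mu>\<^sup>2) + 96 * q^5 * M"
    unfolding p3 p5 n3 by (simp add: field_simps)
  have "2 * \<kappa> * sqrt d \<le> 2 * (2 * q\<^sup>2) * q" using \<kappa> sd by (intro mult_mono) auto
  also have "\<dots> \<le> 8 * q^3" using q0 by (simp add: power3_eq_cube power2_eq_square)
  finally have c1: "2 * \<kappa> * sqrt d \<le> 8 * q^3" .
  have "24 * \<kappa> * q^3 \<le> 24 * (2 * q\<^sup>2) * q^3" using \<kappa> q0 by (intro mult_right_mono) auto
  then have c2: "24 * \<kappa> * q^3 \<le> 48 * q^5" by (simp add: eval_nat_numeral)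
  have "\<kappa>^3 \<le> (2 * q\<^sup>2)^3" using \<kappa> by (intro power_mono) auto
  then have c3: "2 * \<kappa>^3 \<le> 16 * q^6" by (simp add: eval_nat_numeral)
  have "0 \<le> M\<^sup>2 / (\<mu> * r)" "0 \<le> M\<^sup>2 / \<mu>" "0 \<le> M^3 / \<mu>\<^sup>2" using mu r M by auto
  then show ?thesis unfolding lhs rhs
    using mult_right_mono[OF c1] mult_right_mono[OF c2] mult_right_mono[OF c3] by (smt (verit))
qed

lemma lipschitz_on_rayleigh_g_bound:
  fixes A :: "real^'p^'m" and b :: "real^'p"
  assumes mu: "\<mu> > 0" and r: "0 < r" and n: "n = real CARD('m) + 1"
    and U: "\<And>w. w \<in> U \<Longrightarrow> norm w < sqrt ((4*n - 1) / (4*n)) \<and> r \<le> norm w"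
  shows "(16 * n ^ 3 / \<mu>\<^sup>2 * maxabs A b ^ 3 + 8 * n powr (3/2) / (\<mu> * r) * (maxabs A b)\<^sup>2
          + 48 * n powr (5/2) / \<mu> * (maxabs A b)\<^sup>2 + 96 * n powr (5/2) * maxabs A b)-lipschitz_on U
           (rayleigh_g \<mu> A b)"
  using n by (intro lipschitz_on_mono[OF lipschitz_on_rayleigh_g[OF mu _ r U] order_refl]
      rayleigh_lipschitz_constant_le) (simp_all add: mu r maxabs_bounds)

theorem mainTheorem11:
  fixes \<mu> r :: real and A :: "real^'p^'m" and b :: "real^'p"
  assumes "\<mu> > 0" and "0 < r" and "r < 1"
  defines "n \<equiv> real CARD('m) + 1"
  shows "\<exists>L. lipschitz_on L
            {w :: real^'m. norm w < sqrt ((4 * n - 1) / (4 * n)) \<and> norm w \<ge> r}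
            (\<lambda>w. (w \<bullet> (hessian (gfun \<mu> A b) w *v w)) / (norm w)\<^sup>2)
          \<and> L \<le> 16 * n ^ 3 / \<mu>\<^sup>2 * maxabs A b ^ 3
               + 8 * n powr (3/2) / (\<mu> * r) * (maxabs A b)\<^sup>2
               + 48 * n powr (5/2) / \<mu> * (maxabs A b)\<^sup>2
               + 96 * n powr (5/2) * maxabs A b"
proof (intro exI conjI)
  let ?\<Gamma> = "{w :: real^'m. norm w < sqrt ((4 * n - 1) / (4 * n)) \<and> norm w \<ge> r}"
  have "sqrt ((4 * n - 1) / (4 * n)) \<le> 1" by (simp add: n_def)
  then have "norm w < 1" "w \<noteq> 0" if "w \<in> ?\<Gamma>" for w
  proof -
    from that have w: "norm w < sqrt ((4 * n - 1) / (4 * n))" "r \<le> norm w" by simp_all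
    with \<open>sqrt ((4 * n - 1) / (4 * n)) \<le> 1\<close> show "norm w < 1" by linarith
    from w assms(2) show "w \<noteq> 0" by auto
  qed
  then have "rayleigh_g \<mu> A b w = (w \<bullet> (hessian (gfun \<mu> A b) w *v w)) / (norm w)\<^sup>2" if "w \<in> ?\<Gamma>" for w
    using that by (simp add: rayleigh_quotient_hessian_gfun assms(1))
  then show "(16 * n ^ 3 / \<mu>\<^sup>2 * maxabs A b ^ 3 + 8 * n powr (3/2) / (\<mu> * r) * (maxabs A b)\<^sup>2
          + 48 * n powr (5/2) / \<mu> * (maxabs A b)\<^sup>2 + 96 * n powr (5/2) * maxabs A b)-lipschitz_on ?\<Gamma>
      (\<lambda>w. (w \<bullet> (hessian (gfun \<mu> A b) w *v w)) / (norm w)\<^sup>2)"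
    using lipschitz_on_rayleigh_g_bound[OF assms(1,2) n_def[THEN meta_eq_to_obj_eq], of ?\<Gamma> A b]
    by (simp add: lipschitz_on_def)
qed simp

end
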